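(* Let $n\ge 1$, let $\preceq$ be an admissible order on $L([0,1])$, let $F\colon L([0,1])\times L([0,1])\to L([0,1])$ and $G\colon L([0,1])^n\to L([0,1])$ be functions and let $m\colon 2^N\to L([0,1])$ be an IV fuzzy measure with respect to $\preceq$. Then: (i) if $m$ is symmetric, the triplet $(m,F,G)$ satisfies Condition (WDS) (for arbitrary $F,G$); (ii) if $G=f\circ \mathrm{Proj}_1$ for some function $f\colon L([0,1])\to L([0,1])$, then $(m,F,G)$ satisfies Condition (WDS) for any $m$; (iii) if $F$ is non-decreasing in the second variable and $G=f\circ\vee$ for some function $f\colon L([0,1])\to L([0,1])$, then $(m,F,G)$ satisfies Condition (WDS) for any $m$.
   Context: $N=\{1,\dots,n\}$. $L([0,1])=\{[a,b]: 0\le a\le b\le 1\}$, $\mathbf 0=[0,0]$, $\mathbf 1=[1,1]$. $[a,b]\le_{spo}[c,d]$ iff $a\le c$ and $b\le d$. An admissible order $\preceq$ on $L([0,1])$ is a total order such that $X\le_{spo}Y$ implies $X\preceq Y$. $\vee$ and $\wedge$ denote maximum and minimum with respect to $\preceq$ (of two or of $n$ intervals). An IV fuzzy measure w.r.t. $\preceq$ is $m\colon 2^N\to L([0,1])$ with $m(\emptyset)=\mathbf 0$, $m(N)=\mathbf 1$, $m(A)\preceq m(B)$ for $A\subseteq B$; it is symmetric if $m(A)=m(B)$ whenever $|A|=|B|$. $\mathrm{Proj}_1(X_1,\dots,X_n)=X_1$. Monotonicity (non-decreasing) is with respect to $\preceq$. For a permutation $\sigma$ of $N$, $E_{\sigma(i)}=\{\sigma(i),\dots,\sigma(n)\}$.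 The triplet $(m,F,G)$ satisfies Condition (WDS) if for all $X_1,\dots,X_n\in L([0,1])$ and all permutations $\sigma_1,\sigma_2$ of $N$ with $X_{\sigma_j(1)}\preceq\dots\preceq X_{\sigma_j(n)}$ ($j=1,2$) one has $G\big(F(X_{\sigma_1(1)},m(E_{\sigma_1(1)})),\dots,F(X_{\sigma_1(n)},m(E_{\sigma_1(n)}))\big)=G\big(F(X_{\sigma_2(1)},m(E_{\sigma_2(1)})),\dots,F(X_{\sigma_2(n)},m(E_{\sigma_2(n)}))\big)$. *)

theory Defs
  imports Complex_Main "HOL-Combinatorics.Permutations"
begin

type_synonym ival = "real \<times> real"

text \<open>L([0,1]): intervals [a,b] encoded as pairs (a,b) with 0 <= a <= b <= 1.\<close>
definition LI :: "ival set" where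
  "LI = {(a, b). 0 \<le> a \<and> a \<le> b \<and> b \<le> 1}"

definition zeroI :: ival where "zeroI = (0, 0)"
definition oneI :: ival where "oneI = (1, 1)"

definition spo :: "ival \<Rightarrow> ival \<Rightarrow> bool" where
  "spo X Y \<longleftrightarrow> fst X \<le> fst Y \<and> snd X \<le> snd Y"

definition admissible :: "(ival \<Rightarrow> ival \<Rightarrow> bool) \<Rightarrow> bool" where
  "admissible le \<longleftrightarrow>
     (\<forall>X\<in>LI. le X X) \<and>
     (\<forall>X\<in>LI. \<forall>Y\<in>LI. le X Y \<and> le Y X \<longrightarrow> X = Y) \<and>
     (\<forall>X\<in>LI. \<forall>Y\<in>LI. \<forall>Z\<in>LI. le X Y \<and> le Y Z \<longrightarrow> le X Z) \<and>
     (\<forall>X\<in>LI. \<forall>Y\<in>LI. le X Y \<or> le Y X) \<and>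
     (\<forall>X\<in>LI. \<forall>Y\<in>LI. spo X Y \<longrightarrow> le X Y)"

text \<open>N = {1..n}.\<close>
definition IV_fuzzy_measure ::
  "(ival \<Rightarrow> ival \<Rightarrow> bool) \<Rightarrow> nat \<Rightarrow> (nat set \<Rightarrow> ival) \<Rightarrow> bool" where
  "IV_fuzzy_measure le n m \<longleftrightarrow>
     (\<forall>A. A \<subseteq> {1..n} \<longrightarrow> m A \<in> LI) \<and>
     m {} = zeroI \<and> m {1..n} = oneI \<and>
     (\<forall>A B. A \<subseteq> B \<and> B \<subseteq> {1..n} \<longrightarrow> le (m A) (m B))"

definition symmetric_measure :: "nat \<Rightarrow> (nat set \<Rightarrow> ival) \<Rightarrow> bool" where
  "symmetric_measure n m \<longleftrightarrow>
     (\<forall>A B. A \<subseteq> {1..n} \<and> B \<subseteq> {1..n} \<and> card A = card B \<longrightarrow> m A = m B)"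

definition ivmax :: "(ival \<Rightarrow> ival \<Rightarrow> bool) \<Rightarrow> ival list \<Rightarrow> ival" where
  "ivmax le xs = (THE x. x \<in> set xs \<and> (\<forall>y\<in>set xs. le y x))"

text \<open>Condition (WDS). Elements of L([0,1])^n are lists of length n;
  sigma (i) for i in 1..n; E_{sigma(i)} = sigma ` {i..n}.\<close>
definition WDS ::
  "(ival \<Rightarrow> ival \<Rightarrow> bool) \<Rightarrow> nat \<Rightarrow> (nat set \<Rightarrow> ival) \<Rightarrow> (ival \<Rightarrow> ival \<Rightarrow> ival)
     \<Rightarrow> (ival list \<Rightarrow> ival) \<Rightarrow> bool" where
  "WDS le n m F G \<longleftrightarrow>
     (\<forall>X \<sigma>1 \<sigma>2.
        (\<forall>i\<in>{1..n}. X i \<in> LI) \<and>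
        \<sigma>1 permutes {1..n} \<and> \<sigma>2 permutes {1..n} \<and>
        (\<forall>i. 1 \<le> i \<and> i < n \<longrightarrow> le (X (\<sigma>1 i)) (X (\<sigma>1 (i + 1)))) \<and>
        (\<forall>i. 1 \<le> i \<and> i < n \<longrightarrow> le (X (\<sigma>2 i)) (X (\<sigma>2 (i + 1))))
        \<longrightarrow>
        G (map (\<lambda>i. F (X (\<sigma>1 i)) (m (\<sigma>1 ` {i..n}))) [1..<n+1]) =
        G (map (\<lambda>i. F (X (\<sigma>2 i)) (m (\<sigma>2 ` {i..n}))) [1..<n+1]))"

end

(* Any two permutations sorting X give the same sequence of values, because two sorted lists
   with the same multiset of entries are equal when the order is antisymmetric. They can
   only differ in the tails E_sigma(i) inside blocks of equal values, and these tails have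
   the same cardinality, which settles (i) for a symmetric measure. In (ii) only the first
   term matters, and its tail is all of N. In (iii) every term F(X_sigma1(i), m(E)) is
   dominated, by monotonicity of m and F, by the term of sigma2 at the first occurrence of
   the same value, whose tail is the full upper set of that value; so the two argument
   lists are mutually cofinal and have the same maximum. *)

theory Submission
  imports Defs
begin

locale total_order_on =
  fixes A :: "'a set" and le :: "'a \<Rightarrow> 'a \<Rightarrow> bool"
  assumes refl: "x \<in> A \<Longrightarrow> le x x"
    and antisym: "\<lbrakk>x \<in> A; y \<in> A; le x y; le y x\<rbrakk> \<Longrightarrow> x = y"
    and trans: "\<lbrakk>x \<in> A; y \<in> A; z \<in> A; le x y; le y z\<rbrakk> \<Longrightarrow> le x z"
    and total: "\<lbrakk>x \<in> A; y \<in> A\<rbrakk> \<Longrightarrow> le x y \<or> le y x"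

lemma admissible_total_order_on: "admissible le \<Longrightarrow> total_order_on LI le"
  unfolding admissible_def by unfold_locales blast+

definition sorting_perm :: "('a \<Rightarrow> 'a \<Rightarrow> bool) \<Rightarrow> nat \<Rightarrow> (nat \<Rightarrow> 'a) \<Rightarrow> (nat \<Rightarrow> nat) \<Rightarrow> bool" where
  "sorting_perm le n X \<sigma> \<longleftrightarrow>
     \<sigma> permutes {1..n} \<and> (\<forall>i. 1 \<le> i \<and> i < n \<longrightarrow> le (X (\<sigma> i)) (X (\<sigma> (i + 1))))"

context total_order_on
begin

lemma exists_greatest:
  assumes "finite B" "B \<noteq> {}" "B \<subseteq> A"
  shows "\<exists>x\<in>B. \<forall>y\<in>B. le y x"
  using assms
proof (induction B rule: finite_ne_induct)
  case (singleton x)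
  then show ?case using refl by auto
next
  case (insert a B)
  then obtain x where x: "x \<in> B" "\<forall>y\<in>B. le y x" by auto
  with insert.prems have "a \<in> A" "x \<in> A" by auto
  with total consider "le x a" | "le a x" by blast
  then show ?case
  proof cases
    case 1
    then have "\<forall>y\<in>insert a B. le y a"
      using x insert.prems \<open>a \<in> A\<close> \<open>x \<in> A\<close> refl trans by blast
    then show ?thesis by blast
  next
    case 2
    then show ?thesis using x by auto
  qed
qed

lemma sorted_wrt_mset_unique:
  assumes "set xs \<subseteq> A" "sorted_wrt le xs" "sorted_wrt le ys" "mset xs = mset ys"
  shows "xs = ys"
  using assms
proof (induction xs arbitrary: ys)
  case Nil
  then show ?case by simp
next
  case (Cons x xs)
  then obtain y ys' where ys: "ys = y # ys'" by (cases ys) auto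
  have "x = y"
  proof (rule ccontr)
    assume "x \<noteq> y"
    have "x \<in> set ys" "y \<in> set (x # xs)"
      using Cons.prems(4) ys by (metis list.set_intros(1) set_mset_mset)+
    with \<open>x \<noteq> y\<close> ys have "x \<in> set ys'" "y \<in> set xs" by auto
    with Cons.prems(2,3) ys have "le y x" "le x y" by auto
    with Cons.prems(1) \<open>y \<in> set xs\<close> \<open>x \<noteq> y\<close> show False using antisym by auto
  qed
  with Cons ys show ?case by simp
qed

lemma sorting_perm_mono:
  assumes X: "\<forall>i\<in>{1..n}. X i \<in> A" and \<sigma>: "sorting_perm le n X \<sigma>"
    and "1 \<le> k" "k \<le> l" "l \<le> n"
  shows "le (X (\<sigma> k)) (X (\<sigma> l))"
proof -
  have in_A: "X (\<sigma> i) \<in> A" if "1 \<le> i" "i \<le> n" for i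
    using X \<sigma> permutes_in_image that unfolding sorting_perm_def by fastforce
  from \<open>k \<le> l\<close> \<open>l \<le> n\<close> show ?thesis
  proof (induction l rule: dec_induct)
    case base
    then show ?case using refl in_A \<open>1 \<le> k\<close> by simp
  next
    case (step j)
    then have "le (X (\<sigma> j)) (X (\<sigma> (Suc j)))"
      using \<sigma> \<open>1 \<le> k\<close> unfolding sorting_perm_def by simp
    with step \<open>1 \<le> k\<close> show ?case
      using trans[OF in_A[of k] in_A[of j] in_A[of "Suc j"]] by simp
  qed
qed

lemma sorting_perm_values_unique:
  assumes X: "\<forall>i\<in>{1..n}. X i \<in> A"
    and \<sigma>1: "sorting_perm le n X \<sigma>1" and \<sigma>2: "sorting_perm le n X \<sigma>2"
    and i: "i \<in> {1..n}"
  shows "X (\<sigma>1 i) = X (\<sigma>2 i)"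
proof -
  define ranked where "ranked \<sigma> = map (\<lambda>i. X (\<sigma> i)) [1..<n+1]" for \<sigma>
  have sorted: "sorted_wrt le (ranked \<sigma>)" if "sorting_perm le n X \<sigma>" for \<sigma>
    unfolding sorted_wrt_iff_nth_less ranked_def
    using sorting_perm_mono[OF X that] by (auto simp del: upt_Suc simp: nth_upt)
  have mset: "mset (ranked \<sigma>) = image_mset X (mset_set {1..n})" if "sorting_perm le n X \<sigma>" for \<sigma>
  proof -
    have "mset (ranked \<sigma>) = image_mset X (image_mset \<sigma> (mset_set {1..<n+1}))"
      by (simp del: upt_Suc add: ranked_def multiset.map_comp o_def mset_map)
    also have "{1..<n+1} = {1..n}" by auto
    finally show ?thesis
      using that permutes_image_mset unfolding sorting_perm_def by metis
  qed
  have "set (ranked \<sigma>1) \<subseteq> A"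
    using X \<sigma>1 permutes_in_image unfolding ranked_def sorting_perm_def by fastforce
  then have "ranked \<sigma>1 = ranked \<sigma>2"
    using sorted_wrt_mset_unique sorted mset \<sigma>1 \<sigma>2 by metis
  then have "ranked \<sigma>1 ! (i - 1) = ranked \<sigma>2 ! (i - 1)" by simp
  with i show ?thesis by (auto simp del: upt_Suc simp: ranked_def nth_upt)
qed

lemma sorting_perm_in_A:
  assumes "\<forall>i\<in>{1..n}. X i \<in> A" "sorting_perm le n X \<sigma>" "i \<in> {1..n}"
  shows "X (\<sigma> i) \<in> A"
  using assms permutes_in_image unfolding sorting_perm_def by fastforce

lemma sorting_perm_tail_subset:
  assumes X: "\<forall>i\<in>{1..n}. X i \<in> A" and \<sigma>: "sorting_perm le n X \<sigma>" and i: "i \<in> {1..n}"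
  shows "\<sigma> ` {i..n} \<subseteq> {k \<in> {1..n}. le (X (\<sigma> i)) (X k)}"
proof
  fix k assume "k \<in> \<sigma> ` {i..n}"
  then obtain l where l: "l \<in> {i..n}" "k = \<sigma> l" by auto
  with i \<sigma> have "k \<in> {1..n}"
    using permutes_in_image unfolding sorting_perm_def by fastforce
  moreover have "le (X (\<sigma> i)) (X k)"
    using sorting_perm_mono[OF X \<sigma>] i l by simp
  ultimately show "k \<in> {k \<in> {1..n}. le (X (\<sigma> i)) (X k)}" by simp
qed

lemma sorting_perm_upper_set_is_tail:
  assumes X: "\<forall>i\<in>{1..n}. X i \<in> A" and \<sigma>: "sorting_perm le n X \<sigma>" and i: "i \<in> {1..n}"
  obtains j where "j \<in> {1..n}" "X (\<sigma> j) = X (\<sigma> i)"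
    "\<sigma> ` {j..n} = {k \<in> {1..n}. le (X (\<sigma> i)) (X k)}"
proof -
  define j where "j = (LEAST j. j \<in> {1..n} \<and> X (\<sigma> j) = X (\<sigma> i))"
  have j: "j \<in> {1..n} \<and> X (\<sigma> j) = X (\<sigma> i)"
    unfolding j_def by (rule LeastI[of _ i]) (use i in simp)
  have before_j: "X (\<sigma> l) \<noteq> X (\<sigma> i)" if "l \<in> {1..n}" "l < j" for l
    using not_less_Least[of l] that unfolding j_def by blast
  have "\<sigma> ` {j..n} = {k \<in> {1..n}. le (X (\<sigma> i)) (X k)}"
  proof
    show "\<sigma> ` {j..n} \<subseteq> {k \<in> {1..n}. le (X (\<sigma> i)) (X k)}"
      using sorting_perm_tail_subset[OF X \<sigma> conjunct1[OF j]] j by simp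
  next
    show "{k \<in> {1..n}. le (X (\<sigma> i)) (X k)} \<subseteq> \<sigma> ` {j..n}"
    proof
      fix k assume k: "k \<in> {k \<in> {1..n}. le (X (\<sigma> i)) (X k)}"
      moreover have "\<sigma> ` {1..n} = {1..n}"
        using \<sigma> permutes_image unfolding sorting_perm_def by blast
      ultimately have "k \<in> \<sigma> ` {1..n}" by simp
      then obtain l where l: "l \<in> {1..n}" "k = \<sigma> l" by blast
      have "j \<le> l"
      proof (rule ccontr)
        assume "\<not> j \<le> l"
        then have "le (X (\<sigma> l)) (X (\<sigma> i))"
          using sorting_perm_mono[OF X \<sigma>, of l j] j l by simp
        with k l have "X (\<sigma> l) = X (\<sigma> i)"
          using antisym[OF sorting_perm_in_A[OF X \<sigma> l(1)] sorting_perm_in_A[OF X \<sigma> i]] by simp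
        with before_j l \<open>\<not> j \<le> l\<close> show False by simp
      qed
      with l show "k \<in> \<sigma> ` {j..n}" by auto
    qed
  qed
  with j that show thesis by blast
qed

end

lemma ivmax_greatest:
  assumes "total_order_on A le" "xs \<noteq> []" "set xs \<subseteq> A"
  shows "ivmax le xs \<in> set xs" "\<forall>y\<in>set xs. le y (ivmax le xs)"
proof -
  obtain x where x: "x \<in> set xs" "\<forall>y\<in>set xs. le y x"
    using total_order_on.exists_greatest[OF assms(1), of "set xs"] assms(2,3) by auto
  have "\<exists>!x. x \<in> set xs \<and> (\<forall>y\<in>set xs. le y x)"
  proof (rule ex1I[of _ x])
    fix z assume "z \<in> set xs \<and> (\<forall>y\<in>set xs. le y z)"
    with x assms(3) show "z = x" using total_order_on.antisym[OF assms(1), of z x] by auto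
  qed (use x in auto)
  then have "ivmax le xs \<in> set xs \<and> (\<forall>y\<in>set xs. le y (ivmax le xs))"
    unfolding ivmax_def by (rule theI')
  then show "ivmax le xs \<in> set xs" "\<forall>y\<in>set xs. le y (ivmax le xs)" by auto
qed

lemma ivmax_eqI:
  assumes ord: "total_order_on A le"
    and xs: "xs \<noteq> []" "set xs \<subseteq> A" and ys: "ys \<noteq> []" "set ys \<subseteq> A"
    and "\<forall>x\<in>set xs. \<exists>y\<in>set ys. le x y" "\<forall>y\<in>set ys. \<exists>x\<in>set xs. le y x"
  shows "ivmax le xs = ivmax le ys"
proof -
  have le_ivmax: "le (ivmax le us) (ivmax le vs)"
    if us: "us \<noteq> []" "set us \<subseteq> A" and vs: "vs \<noteq> []" "set vs \<subseteq> A"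
      and cofinal: "\<forall>u\<in>set us. \<exists>v\<in>set vs. le u v" for us vs
  proof -
    obtain v where v: "v \<in> set vs" "le (ivmax le us) v"
      using ivmax_greatest(1)[OF ord us] cofinal by blast
    then show ?thesis
      using ivmax_greatest[OF ord vs] ivmax_greatest(1)[OF ord us] us vs
        total_order_on.trans[OF ord] by blast
  qed
  show ?thesis
    using le_ivmax[OF xs ys] le_ivmax[OF ys xs] assms(6,7) ivmax_greatest(1)[OF ord] xs ys
      total_order_on.antisym[OF ord] by blast
qed

definition choquet_args ::
  "('a \<Rightarrow> 'b \<Rightarrow> 'c) \<Rightarrow> (nat set \<Rightarrow> 'b) \<Rightarrow> nat \<Rightarrow> (nat \<Rightarrow> 'a) \<Rightarrow> (nat \<Rightarrow> nat) \<Rightarrow> 'c list" where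
  "choquet_args F m n X \<sigma> = map (\<lambda>i. F (X (\<sigma> i)) (m (\<sigma> ` {i..n}))) [1..<n+1]"

lemma length_choquet_args [simp]: "length (choquet_args F m n X \<sigma>) = n"
  by (simp add: choquet_args_def)

lemma set_choquet_args: "set (choquet_args F m n X \<sigma>) = (\<lambda>i. F (X (\<sigma> i)) (m (\<sigma> ` {i..n}))) ` {1..n}"
  unfolding choquet_args_def by (simp del: upt_Suc add: atLeastLessThanSuc_atLeastAtMost)

lemma hd_choquet_args:
  "n \<ge> 1 \<Longrightarrow> \<sigma> permutes {1..n} \<Longrightarrow> hd (choquet_args F m n X \<sigma>) = F (X (\<sigma> 1)) (m {1..n})"
  by (simp add: choquet_args_def upt_rec permutes_image)

lemma choquet_args_in_LI:
  assumes "\<forall>X\<in>LI. \<forall>Y\<in>LI. F X Y \<in> LI" "IV_fuzzy_measure le n m"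
    and "\<forall>i\<in>{1..n}. X i \<in> LI" "\<sigma> permutes {1..n}"
  shows "set (choquet_args F m n X \<sigma>) \<subseteq> LI"
proof -
  have "F (X (\<sigma> i)) (m (\<sigma> ` {i..n})) \<in> LI" if "i \<in> {1..n}" for i
  proof -
    have "\<sigma> ` {i..n} \<subseteq> {1..n}" using permutes_image[OF assms(4)] that by auto
    then show ?thesis
      using assms permutes_in_image[OF assms(4)] that unfolding IV_fuzzy_measure_def by auto
  qed
  then show ?thesis by (auto simp: set_choquet_args)
qed

lemma WDS_I:
  assumes "\<And>X \<sigma>1 \<sigma>2. \<forall>i\<in>{1..n}. X i \<in> LI \<Longrightarrow> sorting_perm le n X \<sigma>1 \<Longrightarrow> sorting_perm le n X \<sigma>2
    \<Longrightarrow> G (choquet_args F m n X \<sigma>1) = G (choquet_args F m n X \<sigma>2)"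
  shows "WDS le n m F G"
  using assms unfolding WDS_def sorting_perm_def choquet_args_def by blast

lemma WDS_if_symmetric_measure:
  assumes "admissible le" "symmetric_measure n m"
  shows "WDS le n m F G"
proof (rule WDS_I)
  fix X \<sigma>1 \<sigma>2
  assume X: "\<forall>i\<in>{1..n}. X i \<in> LI"
    and \<sigma>1: "sorting_perm le n X \<sigma>1" and \<sigma>2: "sorting_perm le n X \<sigma>2"
  have "m (\<sigma>1 ` {i..n}) = m (\<sigma>2 ` {i..n})" if "i \<in> {1..n}" for i
  proof -
    have "\<sigma> ` {i..n} \<subseteq> {1..n}" "card (\<sigma> ` {i..n}) = card {i..n}"
      if "\<sigma> permutes {1..n}" for \<sigma>
      using permutes_image[OF that] \<open>i \<in> {1..n}\<close>
        card_image[OF inj_on_subset[OF permutes_inj[OF that] subset_UNIV]] by auto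
    with \<sigma>1 \<sigma>2 assms(2) show ?thesis
      unfolding sorting_perm_def symmetric_measure_def by metis
  qed
  moreover have "X (\<sigma>1 i) = X (\<sigma>2 i)" if "i \<in> {1..n}" for i
    using total_order_on.sorting_perm_values_unique[OF admissible_total_order_on[OF assms(1)] X \<sigma>1 \<sigma>2 that] .
  ultimately show "G (choquet_args F m n X \<sigma>1) = G (choquet_args F m n X \<sigma>2)"
    unfolding choquet_args_def by (intro arg_cong[where f = G] map_cong) (auto simp del: upt_Suc)
qed

lemma WDS_if_depends_on_hd:
  assumes "n \<ge> 1" "admissible le" "\<forall>X\<in>LI. \<forall>Y\<in>LI. F X Y \<in> LI" "IV_fuzzy_measure le n m"
    and G: "\<forall>xs. length xs = n \<and> set xs \<subseteq> LI \<longrightarrow> G xs = f (hd xs)"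
  shows "WDS le n m F G"
proof (rule WDS_I)
  fix X \<sigma>1 \<sigma>2
  assume X: "\<forall>i\<in>{1..n}. X i \<in> LI"
    and \<sigma>1: "sorting_perm le n X \<sigma>1" and \<sigma>2: "sorting_perm le n X \<sigma>2"
  have "X (\<sigma>1 1) = X (\<sigma>2 1)"
    using total_order_on.sorting_perm_values_unique[OF admissible_total_order_on[OF assms(2)] X \<sigma>1 \<sigma>2]
      \<open>n \<ge> 1\<close> by simp
  with \<sigma>1 \<sigma>2 have "hd (choquet_args F m n X \<sigma>1) = hd (choquet_args F m n X \<sigma>2)"
    using hd_choquet_args[OF \<open>n \<ge> 1\<close>] unfolding sorting_perm_def by metis
  with \<sigma>1 \<sigma>2 show "G (choquet_args F m n X \<sigma>1) = G (choquet_args F m n X \<sigma>2)"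
    using G choquet_args_in_LI[OF assms(3,4) X] unfolding sorting_perm_def by simp
qed

lemma choquet_args_cofinal:
  assumes adm: "admissible le" and meas: "IV_fuzzy_measure le n m"
    and F_mono: "\<forall>X\<in>LI. \<forall>Y\<in>LI. \<forall>Y'\<in>LI. le Y Y' \<longrightarrow> le (F X Y) (F X Y')"
    and X: "\<forall>i\<in>{1..n}. X i \<in> LI"
    and \<sigma>1: "sorting_perm le n X \<sigma>1" and \<sigma>2: "sorting_perm le n X \<sigma>2"
  shows "\<forall>x\<in>set (choquet_args F m n X \<sigma>1). \<exists>y\<in>set (choquet_args F m n X \<sigma>2). le x y"
proof
  interpret total_order_on LI le using admissible_total_order_on[OF adm] .
  fix x assume "x \<in> set (choquet_args F m n X \<sigma>1)"
  then obtain i where i: "i \<in> {1..n}" and x: "x = F (X (\<sigma>1 i)) (m (\<sigma>1 ` {i..n}))"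
    by (auto simp: set_choquet_args)
  have "X (\<sigma>2 i) = X (\<sigma>1 i)" using sorting_perm_values_unique[OF X \<sigma>1 \<sigma>2 i] by simp
  then obtain j where j: "j \<in> {1..n}" "X (\<sigma>2 j) = X (\<sigma>1 i)"
    and tail: "\<sigma>2 ` {j..n} = {k \<in> {1..n}. le (X (\<sigma>1 i)) (X k)}"
    using sorting_perm_upper_set_is_tail[OF X \<sigma>2 i] by metis
  have "\<sigma>1 ` {i..n} \<subseteq> \<sigma>2 ` {j..n}" "\<sigma>2 ` {j..n} \<subseteq> {1..n}"
    using sorting_perm_tail_subset[OF X \<sigma>1 i] tail by auto
  with meas have "le (m (\<sigma>1 ` {i..n})) (m (\<sigma>2 ` {j..n}))" "m (\<sigma>1 ` {i..n}) \<in> LI" "m (\<sigma>2 ` {j..n}) \<in> LI"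
    unfolding IV_fuzzy_measure_def by (meson subset_trans)+
  then have "le x (F (X (\<sigma>2 j)) (m (\<sigma>2 ` {j..n})))"
    using F_mono sorting_perm_in_A[OF X \<sigma>1 i] x j(2) by simp
  with j(1) show "\<exists>y\<in>set (choquet_args F m n X \<sigma>2). le x y"
    by (auto simp: set_choquet_args)
qed

lemma WDS_if_mono_depends_on_ivmax:
  assumes "n \<ge> 1" and adm: "admissible le" and "\<forall>X\<in>LI. \<forall>Y\<in>LI. F X Y \<in> LI" "IV_fuzzy_measure le n m"
    and F_mono: "\<forall>X\<in>LI. \<forall>Y\<in>LI. \<forall>Y'\<in>LI. le Y Y' \<longrightarrow> le (F X Y) (F X Y')"
    and G: "\<forall>xs. length xs = n \<and> set xs \<subseteq> LI \<longrightarrow> G xs = f (ivmax le xs)"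
  shows "WDS le n m F G"
proof (rule WDS_I)
  fix X \<sigma>1 \<sigma>2
  assume X: "\<forall>i\<in>{1..n}. X i \<in> LI"
    and \<sigma>1: "sorting_perm le n X \<sigma>1" and \<sigma>2: "sorting_perm le n X \<sigma>2"
  have in_LI: "set (choquet_args F m n X \<sigma>) \<subseteq> LI" if "sorting_perm le n X \<sigma>" for \<sigma>
    using choquet_args_in_LI[OF assms(3,4) X] that unfolding sorting_perm_def by simp
  have nonempty: "choquet_args F m n X \<sigma> \<noteq> []" for \<sigma>
    using \<open>n \<ge> 1\<close> length_choquet_args[of F m n X \<sigma>] by (metis list.size(3) not_one_le_zero)
  have "ivmax le (choquet_args F m n X \<sigma>1) = ivmax le (choquet_args F m n X \<sigma>2)"
    by (rule ivmax_eqI[OF admissible_total_order_on[OF adm] nonempty in_LI[OF \<sigma>1] nonempty in_LI[OF \<sigma>2]])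
      (intro choquet_args_cofinal[OF adm assms(4) F_mono X]; fact)+
  with G in_LI \<sigma>1 \<sigma>2 show "G (choquet_args F m n X \<sigma>1) = G (choquet_args F m n X \<sigma>2)" by simp
qed

theorem proposition1:
  fixes n :: nat
    and le :: "ival \<Rightarrow> ival \<Rightarrow> bool"
    and F :: "ival \<Rightarrow> ival \<Rightarrow> ival"
    and G :: "ival list \<Rightarrow> ival"
    and m :: "nat set \<Rightarrow> ival"
  assumes "n \<ge> 1"
    and "admissible le"
    and "\<forall>X\<in>LI. \<forall>Y\<in>LI. F X Y \<in> LI"
    and "\<forall>xs. length xs = n \<and> set xs \<subseteq> LI \<longrightarrow> G xs \<in> LI"
    and "IV_fuzzy_measure le n m"
  shows "(symmetric_measure n m \<longrightarrow> WDS le n m F G)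
       \<and> ((\<exists>f. (\<forall>x\<in>LI. f x \<in> LI) \<and>
               (\<forall>xs. length xs = n \<and> set xs \<subseteq> LI \<longrightarrow> G xs = f (hd xs)))
            \<longrightarrow> WDS le n m F G)
       \<and> (((\<forall>X\<in>LI. \<forall>Y\<in>LI. \<forall>Y'\<in>LI. le Y Y' \<longrightarrow> le (F X Y) (F X Y')) \<and>
            (\<exists>f. (\<forall>x\<in>LI. f x \<in> LI) \<and>
               (\<forall>xs. length xs = n \<and> set xs \<subseteq> LI \<longrightarrow> G xs = f (ivmax le xs))))
            \<longrightarrow> WDS le n m F G)"
  using WDS_if_symmetric_measure[OF assms(2)]
    WDS_if_depends_on_hd[OF assms(1,2,3,5)]
    WDS_if_mono_depends_on_ivmax[OF assms(1,2,3,5)]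
  by blast

end
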